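(* Let $\Lambda_i\in\mathcal H_I$, $i\in[n]$, $\mathbb P$ atomless, $Y\ge0$ with $1<\mathbb E^{\mathbb P}(Y)<\infty$. Suppose $\overline\Lambda^*$ is attainable and at least one $\Lambda_i$ is constant. Then for all $X\in\mathcal X$ $$\mathop{\square}_{i=1}^n\sup_{\mathbb Q\in\mathcal P(\mathbb P,0,Y)}\Lambda_i\mathrm{VaR}^{\mathbb Q}(X)=\inf\Big\{x\in\mathbb R:\mathbb E^{\mathbb P}(Y\mathds 1_{\{X>x\}})\le\sum_{i=1}^n\lambda_i^+\Big\}.$$
   Context: $\Lambda\mathrm{VaR}^{\mathbb Q}(X)=\inf\{x\in\mathbb R:\mathbb Q(X>x)\le\Lambda(x)\}$; $\mathcal H_I$: increasing functions $\mathbb R\to(0,1)$; $\lambda_i^+=\sup_x\Lambda_i(x)$. $\mathcal P(\mathbb P,0,Y)=\{\mathbb Q\ll\mathbb P:0\le\mathrm d\mathbb Q/\mathrm d\mathbb P\le Y\}$. $\overline\Lambda^*(x)=\sup_{y_1+\dots+y_n=x}\sum_i\Lambda_i(y_i)$, attainable if the supremum is attained for every $x$. Inf-convolution $\mathop{\square}_i\rho_i(X)=\inf\{\sum_i\rho_i(X_i):X_i\in\mathcal X,\sum_iX_i=X\}$, $\mathcal X$ a set of real-valued random variables containing constants, closed under sums, differences, multiplication by indicators. *)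

theory Defs
  imports "HOL-Probability.Probability"
begin

definition atomless :: "'a measure \<Rightarrow> bool" where
  "atomless M \<longleftrightarrow> (\<forall>A\<in>sets M. measure M A > 0 \<longrightarrow>
      (\<exists>B\<in>sets M. B \<subseteq> A \<and> 0 < measure M B \<and> measure M B < measure M A))"

definition H_I :: "(real \<Rightarrow> real) set" where
  "H_I = {L. mono L \<and> (\<forall>x. 0 < L x \<and> L x < 1)}"

definition LVaR :: "(real \<Rightarrow> real) \<Rightarrow> 'a measure \<Rightarrow> ('a \<Rightarrow> real) \<Rightarrow> ereal" where
  "LVaR L Q X = Inf {ereal x | x. measure Q {\<omega> \<in> space Q. X \<omega> > x} \<le> L x}"

definition PQ :: "'a measure \<Rightarrow> ('a \<Rightarrow> real) \<Rightarrow> 'a measure set" where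
  "PQ M Y = {density M (\<lambda>\<omega>. ennreal (D \<omega>)) | D.
      D \<in> borel_measurable M \<and> (\<forall>\<omega>\<in>space M. 0 \<le> D \<omega> \<and> D \<omega> \<le> Y \<omega>)
      \<and> integral\<^sup>L M D = 1}"

definition inf_conv :: "'a measure \<Rightarrow> ('a \<Rightarrow> real) set \<Rightarrow> nat \<Rightarrow> (nat \<Rightarrow> ('a \<Rightarrow> real) \<Rightarrow> ereal)
    \<Rightarrow> ('a \<Rightarrow> real) \<Rightarrow> ereal" where
  "inf_conv M Xs n \<rho> X = Inf {(\<Sum>i<n. \<rho> i (Z i)) | Z.
      (\<forall>i<n. Z i \<in> Xs) \<and> (\<forall>\<omega>\<in>space M. (\<Sum>i<n. Z i \<omega>) = X \<omega>)}"

definition Lambda_bar_star :: "nat \<Rightarrow> (nat \<Rightarrow> real \<Rightarrow> real) \<Rightarrow> real \<Rightarrow> real" where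
  "Lambda_bar_star n L x = Sup {(\<Sum>i<n. L i (y i)) | y. (\<Sum>i<n. y i) = x}"

definition attainable :: "nat \<Rightarrow> (nat \<Rightarrow> real \<Rightarrow> real) \<Rightarrow> bool" where
  "attainable n L \<longleftrightarrow> (\<forall>x. \<exists>y. (\<Sum>i<n. y i) = x \<and>
      (\<Sum>i<n. L i (y i)) = Lambda_bar_star n L x)"

definition admissible_rv_set :: "'a measure \<Rightarrow> ('a \<Rightarrow> real) set \<Rightarrow> bool" where
  "admissible_rv_set M Xs \<longleftrightarrow>
     (\<forall>X\<in>Xs. X \<in> borel_measurable M) \<and>
     (\<forall>c. (\<lambda>_. c) \<in> Xs) \<and>
     (\<forall>X\<in>Xs. \<forall>Z\<in>Xs. (\<lambda>\<omega>. X \<omega> + Z \<omega>) \<in> Xs \<and> (\<lambda>\<omega>. X \<omega> - Z \<omega>) \<in> Xs) \<and>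
     (\<forall>X\<in>Xs. \<forall>A\<in>sets M. (\<lambda>\<omega>. indicator A \<omega> * X \<omega>) \<in> Xs)"

end

theory Submission
  imports Defs
begin

text \<open>Let \<open>\<nu>\<close> be the measure with density \<open>Y\<close> and \<open>\<rho>\<^sub>i\<close> the robust \<open>\<Lambda>\<^sub>i\<close>-VaR. Every admissible
  \<open>Q\<close> is dominated by \<open>\<nu>\<close>, and some admissible \<open>Q\<close> gives \<open>{Z > r}\<close> mass \<open>min (\<nu> {Z > r}) 1\<close>;
  hence \<open>\<nu> {Z > a} \<le> \<Lambda>\<^sub>i a\<close> implies \<open>\<rho>\<^sub>i Z \<le> a\<close>, and \<open>\<rho>\<^sub>i Z < r\<close> implies \<open>\<nu> {Z > r} \<le> \<Lambda>\<^sub>i r\<close>.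
  The second fact gives the lower bound, because \<open>{X > \<Sum> r\<^sub>i} \<subseteq> \<Union> {Z\<^sub>i > r\<^sub>i}\<close> for every
  allocation \<open>Z\<close> of \<open>X\<close>. For the upper bound, attainability and the constant \<open>\<Lambda>\<^sub>k\<close> make every \<open>\<Lambda>\<^sub>i\<close>
  attain its supremum \<open>\<lambda>\<^sub>i\<^sup>+\<close> at some \<open>y\<^sub>i\<close> with \<open>\<Sum> y\<^sub>i = x\<close>; as \<open>\<nu>\<close> is atomless, \<open>{X > x}\<close> is
  covered by sets \<open>B\<^sub>i\<close> with \<open>\<nu> B\<^sub>i \<le> \<lambda>\<^sub>i\<^sup>+\<close>, and \<open>X\<close> splits into pieces \<open>Z\<^sub>i\<close> with
  \<open>{Z\<^sub>i > y\<^sub>i} \<subseteq> B\<^sub>i\<close>, so that \<open>\<rho>\<^sub>i Z\<^sub>i \<le> y\<^sub>i\<close> by the first fact.\<close>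

lemma atomless_halving:
  assumes "finite_measure N" and "atomless N" and "A \<in> sets N" and "measure N A > 0"
  shows "\<exists>B\<in>sets N. B \<subseteq> A \<and> 0 < measure N B \<and> measure N B \<le> measure N A / 2 ^ k"
proof (induction k)
  case 0
  show ?case using assms by auto
next
  case (Suc k)
  then obtain B where B: "B \<in> sets N" "B \<subseteq> A" "0 < measure N B" "measure N B \<le> measure N A / 2 ^ k"
    by blast
  then obtain E where E: "E \<in> sets N" "E \<subseteq> B" "0 < measure N E" "measure N E < measure N B"
    using \<open>atomless N\<close> unfolding atomless_def by blast
  have diff: "measure N (B - E) = measure N B - measure N E"
    using finite_measure.finite_measure_Diff[OF \<open>finite_measure N\<close> B(1) E(1)] E(2) by simp
  show ?case
  proof (cases "measure N E \<le> measure N B / 2")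
    case True
    then show ?thesis using E B by (intro bexI[of _ E]) auto
  next
    case False
    then show ?thesis using E B diff by (intro bexI[of _ "B - E"]) auto
  qed
qed

lemma atomless_small_subset:
  assumes "finite_measure N" and "atomless N" and "A \<in> sets N" and "measure N A > 0" and "e > 0"
  shows "\<exists>B\<in>sets N. B \<subseteq> A \<and> 0 < measure N B \<and> measure N B < e"
proof -
  obtain k where "(1/2::real) ^ k < e / measure N A"
    using real_arch_pow_inv[of "e / measure N A" "1/2"] assms by auto
  then have "measure N A / 2 ^ k < e"
    using assms by (simp add: field_simps)
  with atomless_halving[OF assms(1-4), of k] show ?thesis
    by (meson le_less_trans)
qed

text \<open>Sierpinski's theorem: greedily add a subset of at least half the largest measure that still
  fits below \<open>\<alpha>\<close>; the increments tend to zero, so the limit cannot fall short of \<open>\<alpha>\<close>.\<close>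
lemma atomless_intermediate_value:
  assumes fin: "finite_measure N" and at: "atomless N" and A: "A \<in> sets N"
    and "0 \<le> \<alpha>" and "\<alpha> \<le> measure N A"
  shows "\<exists>B\<in>sets N. B \<subseteq> A \<and> measure N B = \<alpha>"
proof -
  interpret finite_measure N by fact
  let ?\<mu> = "measure N"
  define fits where "fits S D \<longleftrightarrow> D \<in> sets N \<and> D \<subseteq> A - S \<and> ?\<mu> D \<le> \<alpha> - ?\<mu> S" for S D
  define P where "P S \<longleftrightarrow> S \<in> sets N \<and> S \<subseteq> A \<and> ?\<mu> S \<le> \<alpha>" for S
  define greedy where "greedy S S' \<longleftrightarrow> S \<subseteq> S' \<and> (\<forall>D. fits S D \<longrightarrow> ?\<mu> D \<le> 2 * (?\<mu> S' - ?\<mu> S))"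
    for S S'
  have step: "\<exists>S'. P S' \<and> greedy S S'" if S: "P S" for S
  proof -
    let ?G = "{?\<mu> D | D. fits S D}"
    define s where "s = Sup ?G"
    have "fits S {}" using S by (simp add: fits_def P_def)
    then have ne: "?G \<noteq> {}" by blast
    have bdd: "bdd_above ?G" by (rule bdd_aboveI[of _ "\<alpha> - ?\<mu> S"]) (auto simp: fits_def)
    have le_s: "?\<mu> D \<le> s" if "fits S D" for D
      unfolding s_def using that by (intro cSup_upper bdd) blast
    show ?thesis
    proof (cases "s \<le> 0")
      case True
      then have "greedy S S" using le_s by (fastforce simp: greedy_def)
      then show ?thesis using S by blast
    next
      case False
      then obtain C where C: "fits S C" "s / 2 < ?\<mu> C"
        using less_cSup_iff[OF ne bdd, of "s / 2"] unfolding s_def by auto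
      have union: "?\<mu> (S \<union> C) = ?\<mu> S + ?\<mu> C"
        using C(1) S by (intro finite_measure_Union) (auto simp: fits_def P_def)
      have "P (S \<union> C)"
        using C S union by (auto simp: fits_def P_def)
      moreover have "greedy S (S \<union> C)"
        using le_s C(2) union by (fastforce simp: greedy_def)
      ultimately show ?thesis by blast
    qed
  qed
  have "P {}" using assms by (simp add: P_def)
  then obtain S where S: "\<And>k. P (S k)" and S_greedy: "\<And>k. greedy (S k) (S (Suc k))"
    using dependent_nat_choice[of "\<lambda>_. P" "\<lambda>_. greedy"] step by blast
  define B where "B = (\<Union>k. S k)"
  have rng: "range S \<subseteq> sets N" using S by (auto simp: P_def)
  have "incseq S" using S_greedy by (intro incseq_SucI) (simp add: greedy_def)
  then have lim: "(\<lambda>k. ?\<mu> (S k)) \<longlonglongrightarrow> ?\<mu> B"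
    unfolding B_def using rng by (intro finite_Lim_measure_incseq)
  have B: "B \<in> sets N" "B \<subseteq> A"
    using rng S unfolding B_def P_def by blast+
  have "?\<mu> B \<le> \<alpha>" using S by (intro LIMSEQ_le_const2[OF lim]) (simp add: P_def)
  moreover have "\<not> ?\<mu> B < \<alpha>"
  proof
    assume less: "?\<mu> B < \<alpha>"
    then have "?\<mu> (A - B) > 0" using B assms by (simp add: finite_measure_Diff)
    then obtain D where D: "D \<in> sets N" "D \<subseteq> A - B" "0 < ?\<mu> D" "?\<mu> D < \<alpha> - ?\<mu> B"
      using atomless_small_subset[OF fin at, of "A - B" "\<alpha> - ?\<mu> B"] A B less by auto
    have "fits (S k) D" for k
    proof -
      have "S k \<subseteq> B" by (auto simp: B_def)
      then have "?\<mu> (S k) \<le> ?\<mu> B" using B(1) by (intro finite_measure_mono)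
      then show ?thesis using D \<open>S k \<subseteq> B\<close> unfolding fits_def by auto
    qed
    then have gaps: "?\<mu> D \<le> 2 * (?\<mu> (S (Suc k)) - ?\<mu> (S k))" for k
      using S_greedy by (simp add: greedy_def)
    have "(\<lambda>k. 2 * (?\<mu> (S (Suc k)) - ?\<mu> (S k))) \<longlonglongrightarrow> 2 * (?\<mu> B - ?\<mu> B)"
      by (intro tendsto_mult tendsto_const tendsto_diff lim LIMSEQ_Suc[OF lim])
    then have "?\<mu> D \<le> 0"
      using LIMSEQ_le_const[of _ "0 :: real" "?\<mu> D"] gaps by auto
    then show False using D by simp
  qed
  ultimately show ?thesis using B by (intro bexI[of _ B]) auto
qed

lemma atomless_cover:
  fixes n :: nat
  assumes fin: "finite_measure N" and at: "atomless N"
  shows "0 < n \<Longrightarrow> A \<in> sets N \<Longrightarrow> \<forall>i<n. 0 \<le> c i \<Longrightarrow> measure N A \<le> (\<Sum>i<n. c i) \<Longrightarrow>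
    \<exists>B. (\<forall>i<n. B i \<in> sets N \<and> B i \<subseteq> A \<and> measure N (B i) \<le> c i) \<and> A \<subseteq> (\<Union>i<n. B i)"
proof (induction n arbitrary: A rule: nat_induct_non_zero)
  case 1
  then show ?case by (intro exI[of _ "\<lambda>_. A"]) auto
next
  case (Suc n)
  interpret finite_measure N by fact
  obtain C where C: "C \<in> sets N" "C \<subseteq> A" "measure N C = min (c n) (measure N A)"
    using atomless_intermediate_value[OF fin at \<open>A \<in> sets N\<close>, of "min (c n) (measure N A)"] Suc.prems
    by auto
  have "measure N (A - C) \<le> (\<Sum>i<n. c i)"
    using Suc.prems C finite_measure_Diff[of A C] sum_nonneg[of "{..<n}" c] by (auto simp: min_def)
  then obtain B where B: "\<forall>i<n. B i \<in> sets N \<and> B i \<subseteq> A - C \<and> measure N (B i) \<le> c i"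
    "A - C \<subseteq> (\<Union>i<n. B i)"
    using Suc.IH[of "A - C"] Suc.prems C by auto
  show ?case
    using B C by (intro exI[of _ "B(n := C)"]) (auto simp: less_Suc_eq)
qed

abbreviation real_density :: "'a measure \<Rightarrow> ('a \<Rightarrow> real) \<Rightarrow> 'a measure" where
  "real_density M f \<equiv> density M (\<lambda>\<omega>. ennreal (f \<omega>))"

lemma measure_real_density:
  assumes f: "f \<in> borel_measurable M" "\<forall>\<omega>\<in>space M. 0 \<le> f \<omega>" "integrable M f"
    and A: "A \<in> sets M"
  shows "measure (real_density M f) A = (\<integral>\<omega>. f \<omega> * indicator A \<omega> \<partial>M)"
proof -
  have "emeasure (real_density M f) A = (\<integral>\<^sup>+ \<omega>. ennreal (f \<omega> * indicator A \<omega>) \<partial>M)"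
    using f A by (auto simp: emeasure_density indicator_def intro!: nn_integral_cong)
  also have "\<dots> = ennreal (\<integral>\<omega>. f \<omega> * indicator A \<omega> \<partial>M)"
    using f A by (intro nn_integral_eq_integral integrable_real_mult_indicator) (auto simp: indicator_def)
  finally show ?thesis
    unfolding measure_def using f by (simp add: integral_nonneg_AE indicator_def)
qed

lemma finite_measure_real_density:
  assumes "f \<in> borel_measurable M" "\<forall>\<omega>\<in>space M. 0 \<le> f \<omega>" "integrable M f"
  shows "finite_measure (real_density M f)"
proof (rule finite_measureI)
  have "emeasure (real_density M f) (space M) = (\<integral>\<^sup>+ \<omega>. ennreal (f \<omega>) \<partial>M)"
    using assms by (auto simp: emeasure_density intro!: nn_integral_cong)
  also have "\<dots> = ennreal (integral\<^sup>L M f)"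
    using assms by (intro nn_integral_eq_integral) auto
  finally show "emeasure (real_density M f) (space (real_density M f)) \<noteq> \<infinity>"
    by simp
qed

lemma emeasure_real_density_eq_0_iff:
  assumes f: "f \<in> borel_measurable M" "\<forall>\<omega>\<in>space M. 0 \<le> f \<omega>" and A: "A \<in> sets M"
  shows "emeasure (real_density M f) A = 0 \<longleftrightarrow> emeasure M {\<omega>\<in>A. 0 < f \<omega>} = 0"
proof -
  have pos: "{\<omega>\<in>A. 0 < f \<omega>} \<in> sets M" using f A by measurable
  have "(AE \<omega> in M. \<omega> \<in> A \<longrightarrow> ennreal (f \<omega>) = 0) \<longleftrightarrow> (AE \<omega> in M. \<omega> \<notin> {\<omega>\<in>A. 0 < f \<omega>})"
    using f(2) by (intro AE_cong) (auto simp: ennreal_eq_0_iff)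
  then show ?thesis
    using null_sets_density_iff[of "\<lambda>\<omega>. ennreal (f \<omega>)" M A] AE_iff_null_sets[OF pos] f A
    by (simp add: null_sets_def)
qed

lemma atomless_real_density:
  assumes "finite_measure M" and at: "atomless M"
    and f: "f \<in> borel_measurable M" "\<forall>\<omega>\<in>space M. 0 \<le> f \<omega>" "integrable M f"
  shows "atomless (real_density M f)"
  unfolding atomless_def
proof (intro ballI impI)
  interpret finite_measure M by fact
  interpret \<nu>: finite_measure "real_density M f"
    using finite_measure_real_density[OF f] .
  let ?\<nu> = "measure (real_density M f)"
  have \<nu>_pos: "?\<nu> C > 0" if "C \<in> sets M" "C \<subseteq> {\<omega>. 0 < f \<omega>}" "measure M C > 0" for C
  proof -
    have "{\<omega>\<in>C. 0 < f \<omega>} = C" using that(2) by blast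
    then show ?thesis
      using that emeasure_real_density_eq_0_iff[OF f(1,2) that(1)]
      by (simp add: \<nu>.emeasure_eq_measure emeasure_eq_measure zero_less_measure_iff)
  qed
  fix A assume A: "A \<in> sets (real_density M f)" "?\<nu> A > 0"
  define A' where "A' = {\<omega>\<in>A. 0 < f \<omega>}"
  have A': "A' \<in> sets M" "A' \<subseteq> A" using f A by (auto simp: A'_def)
  have "measure M A' > 0"
    using A emeasure_real_density_eq_0_iff[OF f(1,2), of A]
    by (simp add: A'_def \<nu>.emeasure_eq_measure emeasure_eq_measure zero_less_measure_iff)
  then obtain B where B: "B \<in> sets M" "B \<subseteq> A'" "0 < measure M B" "measure M B < measure M A'"
    using at A' unfolding atomless_def by blast
  have "?\<nu> B > 0" "?\<nu> (A' - B) > 0"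
    using B A' by (auto simp: A'_def finite_measure_Diff intro!: \<nu>_pos)
  moreover have "?\<nu> A' = ?\<nu> B + ?\<nu> (A' - B)"
    using B A' by (subst \<nu>.finite_measure_Union[symmetric]) (auto intro: arg_cong[where f = ?\<nu>])
  moreover have "?\<nu> A' \<le> ?\<nu> A"
    using A A' by (intro \<nu>.finite_measure_mono) auto
  ultimately show "\<exists>B\<in>sets (real_density M f). B \<subseteq> A \<and> 0 < ?\<nu> B \<and> ?\<nu> B < ?\<nu> A"
    using B A' by (intro bexI[of _ B]) auto
qed

lemma measure_tail_tendsto:
  assumes "finite_measure N" and Z: "Z \<in> borel_measurable N"
  shows "(\<lambda>k. measure N {\<omega>\<in>space N. Z \<omega> > real k}) \<longlonglongrightarrow> 0"
    and "(\<lambda>k. measure N {\<omega>\<in>space N. Z \<omega> > - real k}) \<longlonglongrightarrow> measure N (space N)"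
proof -
  interpret finite_measure N by fact
  have sets: "{\<omega>\<in>space N. Z \<omega> > c} \<in> sets N" for c
    using Z by measurable
  have "(\<Inter>k. {\<omega>\<in>space N. Z \<omega> > real k}) = {}"
    using reals_Archimedean2 by (fastforce dest: less_trans)
  moreover have "decseq (\<lambda>k. {\<omega>\<in>space N. Z \<omega> > real k})"
    by (auto simp: decseq_def)
  ultimately show "(\<lambda>k. measure N {\<omega>\<in>space N. Z \<omega> > real k}) \<longlonglongrightarrow> 0"
    using finite_Lim_measure_decseq[of "\<lambda>k. {\<omega>\<in>space N. Z \<omega> > real k}"] sets by auto
  have "(\<Union>k. {\<omega>\<in>space N. Z \<omega> > - real k}) = space N"
    using reals_Archimedean2 by (force simp: minus_less_iff)
  moreover have "incseq (\<lambda>k. {\<omega>\<in>space N. Z \<omega> > - real k})"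
    by (auto simp: incseq_def)
  ultimately show "(\<lambda>k. measure N {\<omega>\<in>space N. Z \<omega> > - real k}) \<longlonglongrightarrow> measure N (space N)"
    using finite_Lim_measure_incseq[of "\<lambda>k. {\<omega>\<in>space N. Z \<omega> > - real k}"] sets by auto
qed

lemma PQ_E:
  assumes "Q \<in> PQ M Y"
  obtains D where "Q = real_density M D" "D \<in> borel_measurable M"
    "\<forall>\<omega>\<in>space M. 0 \<le> D \<omega> \<and> D \<omega> \<le> Y \<omega>" "integrable M D"
proof -
  obtain D where D: "Q = real_density M D" "D \<in> borel_measurable M"
    "\<forall>\<omega>\<in>space M. 0 \<le> D \<omega> \<and> D \<omega> \<le> Y \<omega>" "integral\<^sup>L M D = 1"
    using assms unfolding PQ_def by blast
  then have "integrable M D" using not_integrable_integral_eq by fastforce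
  with D that show ?thesis by blast
qed

lemma finite_measure_PQ:
  assumes "Q \<in> PQ M Y"
  shows "finite_measure Q"
  using assms by (elim PQ_E) (auto intro: finite_measure_real_density)

lemma measure_PQ_le:
  assumes Y: "Y \<in> borel_measurable M" "\<forall>\<omega>\<in>space M. 0 \<le> Y \<omega>" "integrable M Y"
    and Q: "Q \<in> PQ M Y" and A: "A \<in> sets M"
  shows "measure Q A \<le> measure (real_density M Y) A"
proof -
  obtain D where D: "Q = real_density M D" "D \<in> borel_measurable M"
    "\<forall>\<omega>\<in>space M. 0 \<le> D \<omega> \<and> D \<omega> \<le> Y \<omega>" "integrable M D"
    using Q by (rule PQ_E)
  have "measure Q A = (\<integral>\<omega>. D \<omega> * indicator A \<omega> \<partial>M)"
    using D A by (simp add: measure_real_density)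
  also have "\<dots> \<le> (\<integral>\<omega>. Y \<omega> * indicator A \<omega> \<partial>M)"
    using D Y A by (intro integral_mono integrable_real_mult_indicator) (auto simp: indicator_def)
  also have "\<dots> = measure (real_density M Y) A"
    using Y A by (simp add: measure_real_density)
  finally show ?thesis .
qed

text \<open>The density is \<open>p Y\<close> on \<open>A\<close> and \<open>q Y\<close> off \<open>A\<close>, with \<open>p\<close> as large as allowed and \<open>q\<close> fixing
  the total mass; \<open>1 \<le> E Y\<close> is exactly what makes \<open>q \<le> 1\<close>. In the degenerate cases \<open>v = 0\<close> and
  \<open>v = m\<close> division by zero gives \<open>p = 0\<close> resp. \<open>q = 0\<close>, which is harmless.\<close>
lemma PQ_measure_eq_min:
  assumes Y: "Y \<in> borel_measurable M" "\<forall>\<omega>\<in>space M. 0 \<le> Y \<omega>" "integrable M Y" "1 \<le> integral\<^sup>L M Y"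
    and A: "A \<in> sets M"
  shows "\<exists>Q\<in>PQ M Y. measure Q A = min (measure (real_density M Y) A) 1"
proof -
  define v where "v = (\<integral>\<omega>. Y \<omega> * indicator A \<omega> \<partial>M)"
  define m where "m = integral\<^sup>L M Y"
  define p where "p = min 1 (1 / v)"
  define q where "q = (1 - p * v) / (m - v)"
  define D where "D = (\<lambda>\<omega>. p * (Y \<omega> * indicator A \<omega>) + q * (Y \<omega> - Y \<omega> * indicator A \<omega>))"
  have iYA: "integrable M (\<lambda>\<omega>. Y \<omega> * indicator A \<omega>)"
    using Y A by (intro integrable_real_mult_indicator) auto
  have v: "0 \<le> v" "v \<le> m" unfolding v_def m_def
    using Y iYA by (auto simp: indicator_def intro!: integral_mono)
  have pv: "p * v = min v 1"
    using v by (cases "v = 0") (auto simp: p_def min_def field_simps)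
  have p: "0 \<le> p" "p \<le> 1" using v by (auto simp: p_def)
  have q: "0 \<le> q \<and> q \<le> 1 \<and> p * v + q * (m - v) = 1"
  proof (cases "v < m")
    case True
    then have "1 - p * v \<le> m - v" using pv Y(4) by (auto simp: m_def min_def)
    then show ?thesis using True pv by (auto simp: q_def field_simps)
  next
    case False
    then show ?thesis using v pv Y(4) by (simp add: q_def m_def)
  qed
  have D: "D \<in> borel_measurable M" "integrable M D" "\<forall>\<omega>\<in>space M. 0 \<le> D \<omega> \<and> D \<omega> \<le> Y \<omega>"
    unfolding D_def using Y iYA A p q by (auto simp: indicator_def mult_left_le_one_le)
  moreover have "integral\<^sup>L M D = 1"
    unfolding D_def using iYA Y q by (simp add: integral_diff v_def m_def)
  ultimately have "real_density M D \<in> PQ M Y"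
    unfolding PQ_def by blast
  moreover have "measure (real_density M D) A = (\<integral>\<omega>. D \<omega> * indicator A \<omega> \<partial>M)"
    using D A by (intro measure_real_density) auto
  moreover have "\<dots> = p * v"
    unfolding v_def integral_mult_right_zero[symmetric]
    by (intro Bochner_Integration.integral_cong) (auto simp: D_def indicator_def)
  ultimately show ?thesis
    using pv Y A by (intro bexI[of _ "real_density M D"]) (simp_all add: v_def measure_real_density)
qed

lemma space_PQ: "Q \<in> PQ M Y \<Longrightarrow> space Q = space M"
  and sets_PQ: "Q \<in> PQ M Y \<Longrightarrow> sets Q = sets M"
  by (auto elim: PQ_E)

lemma H_ID:
  assumes "L \<in> H_I"
  shows "mono L" "0 < L x" "L x < 1" "bdd_above (range L)" "L x \<le> (SUP t. L t)"
proof -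
  show "mono L" "0 < L x" "L x < 1" using assms by (auto simp: H_I_def)
  show bdd: "bdd_above (range L)"
    using assms by (auto simp: H_I_def intro!: bdd_aboveI[of _ 1] less_imp_le)
  show "L x \<le> (SUP t. L t)" by (rule cSUP_upper[OF UNIV_I bdd])
qed

definition robust_LVaR :: "'a measure \<Rightarrow> ('a \<Rightarrow> real) \<Rightarrow> (real \<Rightarrow> real) \<Rightarrow> ('a \<Rightarrow> real) \<Rightarrow> ereal"
  where "robust_LVaR M Y L Z = (SUP Q\<in>PQ M Y. LVaR L Q Z)"

lemma robust_LVaR_le:
  assumes Y: "Y \<in> borel_measurable M" "\<forall>\<omega>\<in>space M. 0 \<le> Y \<omega>" "integrable M Y"
    and Z: "Z \<in> borel_measurable M"
    and tail: "measure (real_density M Y) {\<omega>\<in>space M. Z \<omega> > a} \<le> L a"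
  shows "robust_LVaR M Y L Z \<le> ereal a"
  unfolding robust_LVaR_def
proof (rule SUP_least)
  fix Q assume Q: "Q \<in> PQ M Y"
  have "measure Q {\<omega>\<in>space Q. Z \<omega> > a} \<le> measure (real_density M Y) {\<omega>\<in>space M. Z \<omega> > a}"
    unfolding space_PQ[OF Q] using Z by (intro measure_PQ_le[OF Y Q]) measurable
  with tail show "LVaR L Q Z \<le> ereal a"
    unfolding LVaR_def by (intro Inf_lower) auto
qed

text \<open>Some \<open>Q\<close> puts mass \<open>min (\<nu> {Z > r}) 1\<close> on \<open>{Z > r}\<close>, which exceeds \<open>L r\<close> unless the claim
  holds; then \<open>Q {Z > x} > L x\<close> for every \<open>x < r\<close>, forcing \<open>LVaR L Q Z \<ge> r\<close>.\<close>
lemma tail_le_if_robust_LVaR_less: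
  assumes Y: "Y \<in> borel_measurable M" "\<forall>\<omega>\<in>space M. 0 \<le> Y \<omega>" "integrable M Y" "1 \<le> integral\<^sup>L M Y"
    and Z: "Z \<in> borel_measurable M" and L: "mono L" "\<And>x. L x < 1"
    and less: "robust_LVaR M Y L Z < ereal r"
  shows "measure (real_density M Y) {\<omega>\<in>space M. Z \<omega> > r} \<le> L r"
proof (rule ccontr)
  let ?A = "{\<omega>\<in>space M. Z \<omega> > r}"
  assume contra: "\<not> ?thesis"
  have "?A \<in> sets M" using Z by measurable
  then obtain Q where Q: "Q \<in> PQ M Y" "measure Q ?A = min (measure (real_density M Y) ?A) 1"
    using PQ_measure_eq_min[OF Y] by blast
  have QA: "L r < measure Q ?A" using contra Q(2) L(2)[of r] by simp
  interpret Q: finite_measure Q using finite_measure_PQ[OF Q(1)] .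
  have "ereal r \<le> LVaR L Q Z"
    unfolding LVaR_def
  proof (rule Inf_greatest)
    fix y assume "y \<in> {ereal x | x. measure Q {\<omega> \<in> space Q. Z \<omega> > x} \<le> L x}"
    then obtain x where x: "y = ereal x" "measure Q {\<omega> \<in> space Q. Z \<omega> > x} \<le> L x" by blast
    have "r \<le> x"
    proof (rule ccontr)
      assume "\<not> r \<le> x"
      then have "measure Q ?A \<le> measure Q {\<omega> \<in> space Q. Z \<omega> > x}"
        using Z by (intro Q.finite_measure_mono) (auto simp: space_PQ[OF Q(1)] sets_PQ[OF Q(1)])
      also have "\<dots> \<le> L r" using x(2) monoD[OF L(1), of x r] \<open>\<not> r \<le> x\<close> by simp
      finally show False using QA by simp
    qed
    then show "ereal r \<le> y" using x(1) by simp
  qed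
  also have "\<dots> \<le> robust_LVaR M Y L Z"
    unfolding robust_LVaR_def using Q(1) by (rule SUP_upper)
  finally show False using less by simp
qed

lemma robust_LVaR_finite:
  assumes Y: "Y \<in> borel_measurable M" "\<forall>\<omega>\<in>space M. 0 \<le> Y \<omega>" "integrable M Y" "1 < integral\<^sup>L M Y"
    and Z: "Z \<in> borel_measurable M" and L: "L \<in> H_I"
  shows "\<exists>p. robust_LVaR M Y L Z = ereal p"
proof -
  let ?\<nu> = "real_density M Y"
  have \<nu>: "finite_measure ?\<nu>" using finite_measure_real_density[OF Y(1-3)] .
  have Z\<nu>: "Z \<in> borel_measurable ?\<nu>" using Z by simp
  have "measure ?\<nu> (space M) = (\<integral>\<omega>. Y \<omega> * indicator (space M) \<omega> \<partial>M)"
    using Y by (intro measure_real_density) auto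
  also have "\<dots> = integral\<^sup>L M Y"
    by (intro Bochner_Integration.integral_cong) auto
  finally have total: "measure ?\<nu> (space ?\<nu>) > 1" using Y(4) by simp
  obtain k where "measure ?\<nu> {\<omega>\<in>space M. Z \<omega> > real k} < L 0"
    using order_tendstoD(2)[OF measure_tail_tendsto(1)[OF \<nu> Z\<nu>] H_ID(2)[OF L, of 0]]
    by (auto dest: eventually_happens)
  moreover have "L 0 \<le> L (real k)" using monoD[OF H_ID(1)[OF L]] by simp
  ultimately have "robust_LVaR M Y L Z \<le> ereal (real k)"
    by (intro robust_LVaR_le[OF Y(1-3) Z]) simp
  moreover have "robust_LVaR M Y L Z \<noteq> - \<infinity>"
  proof
    assume "robust_LVaR M Y L Z = - \<infinity>"
    then have "measure ?\<nu> {\<omega>\<in>space M. Z \<omega> > - real k} \<le> L (- real k)" for k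
      using Y by (intro tail_le_if_robust_LVaR_less[OF _ _ _ _ Z H_ID(1,3)[OF L]]) auto
    then have "measure ?\<nu> {\<omega>\<in>space M. Z \<omega> > - real k} < 1" for k
      using H_ID(3)[OF L] order.strict_trans1 by blast
    moreover obtain k where "measure ?\<nu> {\<omega>\<in>space M. Z \<omega> > - real k} > 1"
      using order_tendstoD(1)[OF measure_tail_tendsto(2)[OF \<nu> Z\<nu>] total]
      by (auto dest: eventually_happens)
    ultimately show False by (metis less_asym)
  qed
  ultimately show ?thesis by (cases "robust_LVaR M Y L Z") auto
qed

definition allocations :: "'a measure \<Rightarrow> ('a \<Rightarrow> real) set \<Rightarrow> nat \<Rightarrow> ('a \<Rightarrow> real) \<Rightarrow> (nat \<Rightarrow> 'a \<Rightarrow> real) set"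
  where "allocations M Xs n X = {Z. (\<forall>i<n. Z i \<in> Xs) \<and> (\<forall>\<omega>\<in>space M. (\<Sum>i<n. Z i \<omega>) = X \<omega>)}"

lemma inf_conv_eq_INF: "inf_conv M Xs n \<rho> X = (INF Z\<in>allocations M Xs n X. \<Sum>i<n. \<rho> i (Z i))"
  unfolding inf_conv_def allocations_def image_def by (intro arg_cong[where f = Inf]) blast

lemma
  assumes "admissible_rv_set M Xs"
  shows admissible_measurable: "X \<in> Xs \<Longrightarrow> X \<in> borel_measurable M"
    and admissible_const: "(\<lambda>_. c) \<in> Xs"
    and admissible_add: "X \<in> Xs \<Longrightarrow> Z \<in> Xs \<Longrightarrow> (\<lambda>\<omega>. X \<omega> + Z \<omega>) \<in> Xs"
    and admissible_diff: "X \<in> Xs \<Longrightarrow> Z \<in> Xs \<Longrightarrow> (\<lambda>\<omega>. X \<omega> - Z \<omega>) \<in> Xs"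
    and admissible_indicator_mult: "X \<in> Xs \<Longrightarrow> A \<in> sets M \<Longrightarrow> (\<lambda>\<omega>. indicator A \<omega> * X \<omega>) \<in> Xs"
  using assms unfolding admissible_rv_set_def by blast+

lemma admissible_sum:
  assumes "admissible_rv_set M Xs" and "finite I" and "\<forall>i\<in>I. f i \<in> Xs"
  shows "(\<lambda>\<omega>. \<Sum>i\<in>I. f i \<omega>) \<in> Xs"
  using assms(2,3)
  by (induction I rule: finite_induct) (auto intro: admissible_add[OF assms(1)] admissible_const[OF assms(1)])

text \<open>Each \<open>Z i\<close> with \<open>i \<noteq> k\<close> exceeds \<open>y i\<close> by \<open>X - t\<close> on \<open>B i\<close>; the remainder \<open>Z k\<close> exceeds \<open>y k\<close>
  by \<open>(X - t) (1 - s)\<close>, where \<open>s\<close> counts the other \<open>B i\<close> containing \<omega>. This is positive only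
  when \<open>s = 0\<close> and \<open>X > t\<close>, since all \<open>B i\<close> lie inside \<open>{X > t}\<close>.\<close>
lemma allocation_with_tails_in_cover:
  assumes adm: "admissible_rv_set M Xs" and X: "X \<in> Xs" and k: "k < n"
    and B: "\<forall>i<n. B i \<in> sets M \<and> B i \<subseteq> {\<omega>\<in>space M. X \<omega> > (\<Sum>i<n. y i)}"
    and cover: "{\<omega>\<in>space M. X \<omega> > (\<Sum>i<n. y i)} \<subseteq> (\<Union>i<n. B i)"
  shows "\<exists>Z\<in>allocations M Xs n X. \<forall>i<n. {\<omega>\<in>space M. Z i \<omega> > y i} \<subseteq> B i"
proof -
  define t where "t = (\<Sum>i<n. y i)"
  define K where "K = {..<n} - {k}"
  define F where "F i \<omega> = indicator (B i) \<omega> * (X \<omega> - t) + y i" for i \<omega>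
  define Z where "Z i = (if i = k then (\<lambda>\<omega>. X \<omega> - (\<Sum>j\<in>K. F j \<omega>)) else F i)" for i
  have split_k: "(\<Sum>i<n. g i) = g k + (\<Sum>i\<in>K. g i)" for g :: "nat \<Rightarrow> real"
    unfolding K_def using k by (simp add: sum.remove)
  have F: "F i \<in> Xs" if "i < n" for i
    unfolding F_def using adm X B that
    by (intro admissible_add admissible_indicator_mult admissible_diff admissible_const) auto
  then have "(\<lambda>\<omega>. \<Sum>j\<in>K. F j \<omega>) \<in> Xs"
    by (intro admissible_sum[OF adm]) (auto simp: K_def)
  then have "Z \<in> allocations M Xs n X"
    using F X split_k[of "\<lambda>i. Z i _"] by (auto simp: allocations_def Z_def K_def intro: admissible_diff[OF adm])
  moreover have "\<omega> \<in> B i" if i: "i < n" and \<omega>: "\<omega> \<in> space M" "Z i \<omega> > y i" for i \<omega>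
  proof (cases "i = k")
    case False
    then show ?thesis using \<omega> by (cases "\<omega> \<in> B i") (auto simp: Z_def F_def)
  next
    case True
    define s where "s = (\<Sum>j\<in>K. indicator (B j) \<omega> :: real)"
    have "(\<Sum>j\<in>K. F j \<omega>) = s * (X \<omega> - t) + (\<Sum>j\<in>K. y j)"
      unfolding F_def s_def by (simp add: sum.distrib sum_distrib_right)
    then have "Z k \<omega> - y k = (X \<omega> - t) * (1 - s)"
      using split_k[of y] by (simp add: Z_def t_def algebra_simps)
    then have pos: "(X \<omega> - t) * (1 - s) > 0" using \<omega> True by simp
    show ?thesis
    proof (cases "\<exists>j\<in>K. \<omega> \<in> B j")
      case True
      then obtain j where "j \<in> K" "\<omega> \<in> B j" by blast
      then have "X \<omega> > t" using B by (auto simp: t_def K_def)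
      have "indicator (B j) \<omega> \<le> s"
        unfolding s_def using \<open>j \<in> K\<close> by (intro member_le_sum) (auto simp: K_def)
      then have "1 \<le> s" using \<open>\<omega> \<in> B j\<close> by simp
      then show ?thesis using pos \<open>X \<omega> > t\<close> mult_nonneg_nonpos[of "X \<omega> - t" "1 - s"] by simp
    next
      case False
      then have "s = 0" by (simp add: s_def)
      then have "\<omega> \<in> (\<Union>i<n. B i)" using pos \<omega> cover by (auto simp: t_def)
      then show ?thesis using False \<open>i = k\<close> by (auto simp: K_def)
    qed
  qed
  ultimately show ?thesis by blast
qed

text \<open>Shifting mass between coordinate \<open>j\<close> and the coordinate \<open>k\<close> of the constant \<open>L k\<close> keeps the
  sum of arguments and changes the objective by \<open>L j u - L j (y j)\<close>, so optimality of \<open>y\<close> forces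
  \<open>L j u \<le> L j (y j)\<close>.\<close>
lemma attainable_sup_attained:
  assumes bdd: "\<forall>i<n. bdd_above (range (L i))" and att: "attainable n L"
    and k: "k < n" "\<forall>x. L k x = c"
  shows "\<exists>y. (\<Sum>i<n. y i) = x \<and> (\<forall>j<n. L j (y j) = (SUP t. L j t))"
proof -
  let ?S = "{(\<Sum>i<n. L i (w i)) | w. (\<Sum>i<n. w i) = x}"
  obtain y where y: "(\<Sum>i<n. y i) = x" "(\<Sum>i<n. L i (y i)) = Sup ?S"
    using att unfolding attainable_def Lambda_bar_star_def by blast
  have "bdd_above ?S"
    by (rule bdd_aboveI[of _ "\<Sum>i<n. SUP t. L i t"]) (auto intro!: sum_mono cSUP_upper bdd[rule_format])
  have max: "L j u \<le> L j (y j)" if j: "j < n" "j \<noteq> k" for j u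
  proof -
    define \<delta> where "\<delta> i = (if i = j then u - y j else 0) + (if i = k then y j - u else 0)" for i
    have "(\<Sum>i<n. y i + \<delta> i) = x"
      using y(1) j k by (simp add: \<delta>_def sum.distrib)
    then have "(\<Sum>i<n. L i (y i + \<delta> i)) \<le> Sup ?S"
      by (intro cSup_upper \<open>bdd_above ?S\<close>) (auto intro!: exI[of _ "\<lambda>i. y i + \<delta> i"])
    moreover have "L i (y i + \<delta> i) = L i (y i) + (if i = j then L j u - L j (y j) else 0)" for i
      using j k by (auto simp: \<delta>_def)
    then have "(\<Sum>i<n. L i (y i + \<delta> i)) = (\<Sum>i<n. L i (y i)) + (L j u - L j (y j))"
      using j by (simp add: sum.distrib)
    ultimately show ?thesis using y(2) by simp
  qed
  have "L j (y j) = (SUP t. L j t)" if "j < n" for j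
  proof (rule antisym)
    show "L j (y j) \<le> (SUP t. L j t)" using bdd that by (intro cSUP_upper) auto
    show "(SUP t. L j t) \<le> L j (y j)" using max k that by (cases "j = k") (auto intro: cSUP_least)
  qed
  with y(1) show ?thesis by blast
qed

lemma Inf_tail_le_inf_conv:
  assumes Y: "Y \<in> borel_measurable M" "\<forall>\<omega>\<in>space M. 0 \<le> Y \<omega>" "integrable M Y" "1 < integral\<^sup>L M Y"
    and adm: "admissible_rv_set M Xs" and L: "\<forall>i<n. L i \<in> H_I" and "0 < n"
    and X: "X \<in> borel_measurable M"
  shows "Inf {ereal x | x. measure (real_density M Y) {\<omega>\<in>space M. X \<omega> > x} \<le> (\<Sum>i<n. SUP t. L i t)}
    \<le> inf_conv M Xs n (\<lambda>i. robust_LVaR M Y (L i)) X"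
  unfolding inf_conv_eq_INF
proof (rule INF_greatest)
  let ?\<nu> = "real_density M Y"
  let ?T = "Inf {ereal x | x. measure ?\<nu> {\<omega>\<in>space M. X \<omega> > x} \<le> (\<Sum>i<n. SUP t. L i t)}"
  interpret \<nu>: finite_measure ?\<nu> using finite_measure_real_density[OF Y(1-3)] .
  fix Z assume "Z \<in> allocations M Xs n X"
  then have Z: "\<And>i. i < n \<Longrightarrow> Z i \<in> borel_measurable M" and sum_Z: "\<forall>\<omega>\<in>space M. (\<Sum>i<n. Z i \<omega>) = X \<omega>"
    using admissible_measurable[OF adm] by (auto simp: allocations_def)
  obtain p where p: "\<And>i. i < n \<Longrightarrow> robust_LVaR M Y (L i) (Z i) = ereal (p i)"
    using bchoice[of "{..<n}" "\<lambda>i p. robust_LVaR M Y (L i) (Z i) = ereal p"]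
      robust_LVaR_finite[OF Y Z] L by auto
  have "?T \<le> ereal (\<Sum>i<n. p i) + ereal e" if "0 < e" for e
  proof -
    define r where "r i = p i + e / n" for i
    have tail_Z: "measure ?\<nu> {\<omega>\<in>space M. Z i \<omega> > r i} \<le> (SUP t. L i t)" if "i < n" for i
    proof -
      have "robust_LVaR M Y (L i) (Z i) < ereal (r i)"
        using p[OF \<open>i < n\<close>] \<open>0 < e\<close> \<open>0 < n\<close> by (simp add: r_def)
      then have "measure ?\<nu> {\<omega>\<in>space M. Z i \<omega> > r i} \<le> L i (r i)"
        using Y \<open>i < n\<close> L H_ID by (intro tail_le_if_robust_LVaR_less[OF _ _ _ _ Z]) auto
      also have "\<dots> \<le> (SUP t. L i t)" using H_ID(5) L \<open>i < n\<close> by blast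
      finally show ?thesis .
    qed
    have "{\<omega>\<in>space M. X \<omega> > (\<Sum>i<n. r i)} \<subseteq> (\<Union>i<n. {\<omega>\<in>space M. Z i \<omega> > r i})"
      using sum_Z sum_mono[of "{..<n}" "\<lambda>i. Z i _" r] by (force simp: not_less)
    then have "measure ?\<nu> {\<omega>\<in>space M. X \<omega> > (\<Sum>i<n. r i)}
        \<le> measure ?\<nu> (\<Union>i<n. {\<omega>\<in>space M. Z i \<omega> > r i})"
      using Z by (intro \<nu>.finite_measure_mono) auto
    also have "\<dots> \<le> (\<Sum>i<n. measure ?\<nu> {\<omega>\<in>space M. Z i \<omega> > r i})"
      using Z by (intro \<nu>.finite_measure_subadditive_finite) auto
    also have "\<dots> \<le> (\<Sum>i<n. SUP t. L i t)"
      using tail_Z by (intro sum_mono) auto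
    finally have "?T \<le> ereal (\<Sum>i<n. r i)" by (intro Inf_lower) blast
    then show ?thesis using \<open>0 < n\<close> by (simp add: r_def sum.distrib)
  qed
  then have "?T \<le> ereal (\<Sum>i<n. p i)" by (rule ereal_le_epsilon2)
  also have "\<dots> = (\<Sum>i<n. robust_LVaR M Y (L i) (Z i))" using p by simp
  finally show "?T \<le> (\<Sum>i<n. robust_LVaR M Y (L i) (Z i))" .
qed

lemma inf_conv_le_Inf_tail:
  assumes "finite_measure M" and "atomless M"
    and Y: "Y \<in> borel_measurable M" "\<forall>\<omega>\<in>space M. 0 \<le> Y \<omega>" "integrable M Y"
    and adm: "admissible_rv_set M Xs" and L: "\<forall>i<n. L i \<in> H_I" and att: "attainable n L"
    and k: "k < n" "\<forall>x. L k x = c" and X: "X \<in> Xs"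
  shows "inf_conv M Xs n (\<lambda>i. robust_LVaR M Y (L i)) X
    \<le> Inf {ereal x | x. measure (real_density M Y) {\<omega>\<in>space M. X \<omega> > x} \<le> (\<Sum>i<n. SUP t. L i t)}"
proof (rule Inf_greatest)
  let ?\<nu> = "real_density M Y"
  fix z assume "z \<in> {ereal x | x. measure ?\<nu> {\<omega>\<in>space M. X \<omega> > x} \<le> (\<Sum>i<n. SUP t. L i t)}"
  then obtain t where z: "z = ereal t"
    and tail_X: "measure ?\<nu> {\<omega>\<in>space M. X \<omega> > t} \<le> (\<Sum>i<n. SUP t. L i t)"
    by blast
  have "\<forall>i<n. bdd_above (range (L i))" using L by (simp add: H_ID(4))
  then obtain y where y: "(\<Sum>i<n. y i) = t" "\<And>j. j < n \<Longrightarrow> L j (y j) = (SUP t. L j t)"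
    using attainable_sup_attained[OF _ att k, of t] by blast
  have A: "{\<omega>\<in>space M. X \<omega> > t} \<in> sets M"
    using admissible_measurable[OF adm X] by measurable
  have "\<forall>i<n. 0 \<le> (SUP t. L i t)"
    using L H_ID(2,5) by (metis less_le_trans less_imp_le)
  moreover have "0 < n" using k by simp
  ultimately have "\<exists>B. (\<forall>i<n. B i \<in> sets ?\<nu> \<and> B i \<subseteq> {\<omega>\<in>space M. X \<omega> > t}
      \<and> measure ?\<nu> (B i) \<le> (SUP t. L i t)) \<and> {\<omega>\<in>space M. X \<omega> > t} \<subseteq> (\<Union>i<n. B i)"
    using A tail_X
    by (intro atomless_cover[OF finite_measure_real_density[OF Y] atomless_real_density[OF assms(1,2) Y]])
      simp_all
  then obtain B where B: "\<forall>i<n. B i \<in> sets M \<and> B i \<subseteq> {\<omega>\<in>space M. X \<omega> > t}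
      \<and> measure ?\<nu> (B i) \<le> (SUP t. L i t)"
    and cover: "{\<omega>\<in>space M. X \<omega> > t} \<subseteq> (\<Union>i<n. B i)"
    by auto
  then obtain Z where Z: "Z \<in> allocations M Xs n X"
    and tails_Z: "\<And>i. i < n \<Longrightarrow> {\<omega>\<in>space M. Z i \<omega> > y i} \<subseteq> B i"
    using allocation_with_tails_in_cover[OF adm X k(1), of B y] y(1) B cover by auto
  have "robust_LVaR M Y (L i) (Z i) \<le> ereal (y i)" if "i < n" for i
  proof (rule robust_LVaR_le[OF Y])
    show Zi: "Z i \<in> borel_measurable M"
      using Z that admissible_measurable[OF adm] by (auto simp: allocations_def)
    have "measure ?\<nu> {\<omega>\<in>space M. Z i \<omega> > y i} \<le> measure ?\<nu> (B i)"
      using tails_Z[OF that] B that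
      by (intro finite_measure.finite_measure_mono[OF finite_measure_real_density[OF Y]]) auto
    also have "\<dots> \<le> L i (y i)" using B y(2) that by simp
    finally show "measure ?\<nu> {\<omega>\<in>space M. Z i \<omega> > y i} \<le> L i (y i)" .
  qed
  then have "(\<Sum>i<n. robust_LVaR M Y (L i) (Z i)) \<le> z"
    using sum_mono[of "{..<n}" "\<lambda>i. robust_LVaR M Y (L i) (Z i)" "\<lambda>i. ereal (y i)"] y(1) z by simp
  then show "inf_conv M Xs n (\<lambda>i. robust_LVaR M Y (L i)) X \<le> z"
    unfolding inf_conv_eq_INF using Z by (blast intro: INF_lower2)
qed

theorem mainTheorem18:
  fixes M :: "'a measure" and Y :: "'a \<Rightarrow> real" and n :: nat
    and L :: "nat \<Rightarrow> real \<Rightarrow> real" and Xs :: "('a \<Rightarrow> real) set" and X :: "'a \<Rightarrow> real"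
  assumes "prob_space M" and "atomless M"
    and "admissible_rv_set M Xs"
    and "\<forall>i<n. L i \<in> H_I"
    and "Y \<in> borel_measurable M" and "\<forall>\<omega>\<in>space M. 0 \<le> Y \<omega>"
    and "integrable M Y" and "1 < integral\<^sup>L M Y"
    and "attainable n L"
    and "\<exists>i<n. \<exists>c. \<forall>x. L i x = c"
    and "X \<in> Xs"
  shows "inf_conv M Xs n (\<lambda>i Z. SUP Q\<in>PQ M Y. LVaR (L i) Q Z) X
       = Inf {ereal x | x. integral\<^sup>L M (\<lambda>\<omega>. Y \<omega> * indicator {\<omega>\<in>space M. X \<omega> > x} \<omega>)
                            \<le> (\<Sum>i<n. (SUP t. L i t))}"
proof -
  obtain k c where k: "k < n" "\<forall>x. L k x = c" using assms(10) by blast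
  have X: "X \<in> borel_measurable M" using admissible_measurable[OF assms(3,11)] .
  have "{\<omega>\<in>space M. X \<omega> > x} \<in> sets M" for x
    using X by measurable
  then have "(\<integral>\<omega>. Y \<omega> * indicator {\<omega>\<in>space M. X \<omega> > x} \<omega> \<partial>M)
      = measure (real_density M Y) {\<omega>\<in>space M. X \<omega> > x}" for x
    using assms(5-7) by (intro measure_real_density[symmetric])
  moreover have "(\<lambda>i Z. SUP Q\<in>PQ M Y. LVaR (L i) Q Z) = (\<lambda>i. robust_LVaR M Y (L i))"
    by (intro ext) (simp add: robust_LVaR_def)
  ultimately show ?thesis
    using inf_conv_le_Inf_tail[OF prob_space.axioms(1)[OF assms(1)] assms(2,5-7,3,4,9) k assms(11)]
      Inf_tail_le_inf_conv[OF assms(5-8,3,4) _ X] k by (simp add: antisym)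
qed

end
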